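(* The category $\mathsf{PreOrdGrp}$ of preordered groups is not subtractive.
   Context: A preordered group is a pair $(G,P_G)$ with $G$ an additively written group and $P_G\subseteq G$ a submonoid closed under conjugation; morphisms are group homomorphisms $f$ with $f(P_G)\subseteq P_H$. This is $\mathsf{PreOrdGrp}$, a pointed finitely complete category (limits computed componentwise, zero object the trivial group). A pointed finitely complete category is subtractive (in the sense of Z. Janelidze) if for every reflexive internal relation $R\rightarrowtail X\times X$ such that $\langle 1_X,0\rangle\colon X\to X\times X$ factors through $R$, also $\langle 0,1_X\rangle\colon X\to X\times X$ factors through $R$. *)

theory Defs
  imports "HOL-Algebra.Group"
begin

text \<open>A preordered group: a group G (HOL-Algebra, written multiplicatively)
  together with a positive cone P, a submonoid closed under conjugation.\<close>
type_synonym 'a pgrp = "'a monoid \<times> 'a set"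

definition preord_group :: "'a pgrp \<Rightarrow> bool" where
  "preord_group X \<longleftrightarrow> group (fst X) \<and> snd X \<subseteq> carrier (fst X)
     \<and> \<one>\<^bsub>fst X\<^esub> \<in> snd X
     \<and> (\<forall>p\<in>snd X. \<forall>q\<in>snd X. p \<otimes>\<^bsub>fst X\<^esub> q \<in> snd X)
     \<and> (\<forall>g\<in>carrier (fst X). \<forall>p\<in>snd X.
          g \<otimes>\<^bsub>fst X\<^esub> p \<otimes>\<^bsub>fst X\<^esub> inv\<^bsub>fst X\<^esub> g \<in> snd X)"

definition pgrp_hom :: "'a pgrp \<Rightarrow> 'b pgrp \<Rightarrow> ('a \<Rightarrow> 'b) \<Rightarrow> bool" where
  "pgrp_hom X Y f \<longleftrightarrow> f \<in> hom (fst X) (fst Y) \<and> f ` snd X \<subseteq> snd Y"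

definition pgrp_prod :: "'a pgrp \<Rightarrow> 'b pgrp \<Rightarrow> ('a \<times> 'b) pgrp" where
  "pgrp_prod X Y = (fst X \<times>\<times> fst Y, snd X \<times> snd Y)"

text \<open>Monomorphisms of PreOrdGrp are the injective morphisms.\<close>
definition pgrp_mono :: "'a pgrp \<Rightarrow> 'b pgrp \<Rightarrow> ('a \<Rightarrow> 'b) \<Rightarrow> bool" where
  "pgrp_mono X Y f \<longleftrightarrow> pgrp_hom X Y f \<and> inj_on f (carrier (fst X))"

definition factors_through :: "'c pgrp \<Rightarrow> 'r pgrp \<Rightarrow> ('c \<Rightarrow> 'b) \<Rightarrow> ('r \<Rightarrow> 'b) \<Rightarrow> bool" where
  "factors_through A R f m \<longleftrightarrow>
     (\<exists>g. pgrp_hom A R g \<and> (\<forall>a\<in>carrier (fst A). m (g a) = f a))"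

definition internal_relation :: "'a pgrp \<Rightarrow> 'r pgrp \<Rightarrow> ('r \<Rightarrow> 'a \<times> 'a) \<Rightarrow> bool" where
  "internal_relation X R m \<longleftrightarrow> preord_group X \<and> preord_group R
     \<and> pgrp_mono R (pgrp_prod X X) m"

definition reflexive_relation :: "'a pgrp \<Rightarrow> 'r pgrp \<Rightarrow> ('r \<Rightarrow> 'a \<times> 'a) \<Rightarrow> bool" where
  "reflexive_relation X R m \<longleftrightarrow> internal_relation X R m
     \<and> factors_through X R (\<lambda>x. (x, x)) m"

definition subtractive_condition :: "'a pgrp \<Rightarrow> 'r pgrp \<Rightarrow> ('r \<Rightarrow> 'a \<times> 'a) \<Rightarrow> bool" where
  "subtractive_condition X R m \<longleftrightarrow>
     (reflexive_relation X R m \<and> factors_through X R (\<lambda>x. (x, \<one>\<^bsub>fst X\<^esub>)) m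
       \<longrightarrow> factors_through X R (\<lambda>x. (\<one>\<^bsub>fst X\<^esub>, x)) m)"

end

theory Submission
  imports Defs "HOL-Algebra.Elementary_Groups"
begin

text \<open>Take X = \<int> with the cone of non-negative integers, and for R the whole group
  \<int> \<times> \<int>, embedded by the identity, but with the smaller cone
  {(a, b). 0 \<le> b \<le> a}. The maps x \<mapsto> (x, x) and x \<mapsto> (x, 0) send
  non-negative integers into this cone, so R is reflexive and \<langle>1,0\<rangle> factors
  through it; \<langle>0,1\<rangle> does not, since it sends 1 to (0, 1).\<close>

lemma preord_group_comm_groupI:
  fixes G (structure)
  assumes "comm_group G" and "P \<subseteq> carrier G" and "\<one> \<in> P"
    and "\<And>p q. p \<in> P \<Longrightarrow> q \<in> P \<Longrightarrow> p \<otimes> q \<in> P"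
  shows "preord_group (G, P)"
proof -
  interpret comm_group G by (rule assms(1))
  have "g \<otimes> p \<otimes> inv g = p" if "g \<in> carrier G" "p \<in> carrier G" for g p
    using that by (simp add: m_comm[of g p] m_assoc)
  then show ?thesis
    using assms unfolding preord_group_def by (auto simp: is_group subsetD)
qed

lemma comm_group_DirProd:
  assumes "comm_group G" and "comm_group H"
  shows "comm_group (G \<times>\<times> H)"
proof -
  interpret G: comm_group G by (rule assms(1))
  interpret H: comm_group H by (rule assms(2))
  show ?thesis
    by (rule group.group_comm_groupI[OF DirProd_group[OF G.is_group H.is_group]])
       (auto simp: G.m_comm H.m_comm)
qed

lemma factors_through_id_iff:
  assumes "preord_group A"
  shows "factors_through A R f id \<longleftrightarrow> pgrp_hom A R f"
proof
  assume "factors_through A R f id"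
  then obtain g where g: "pgrp_hom A R g" "\<And>a. a \<in> carrier (fst A) \<Longrightarrow> g a = f a"
    unfolding factors_through_def by auto
  interpret group "fst A"
    using assms by (simp add: preord_group_def)
  have "f ` snd A = g ` snd A"
    using assms g(2) by (auto simp: preord_group_def image_def subset_iff)
  with g show "pgrp_hom A R f"
    unfolding pgrp_hom_def hom_def by (auto simp: Pi_iff)
qed (auto simp: factors_through_def)

definition int_pgrp :: "int pgrp" where
  "int_pgrp = (integer_group, {x. 0 \<le> x})"

definition wedge_pgrp :: "(int \<times> int) pgrp" where
  "wedge_pgrp = (integer_group \<times>\<times> integer_group, {(a, b). 0 \<le> b \<and> b \<le> a})"

lemma preord_group_int_pgrp: "preord_group int_pgrp"
  unfolding int_pgrp_def
  by (rule preord_group_comm_groupI) (auto simp: abelian_integer_group)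

lemma preord_group_wedge_pgrp: "preord_group wedge_pgrp"
  unfolding wedge_pgrp_def
  by (rule preord_group_comm_groupI)
     (auto simp: comm_group_DirProd abelian_integer_group)

lemma internal_relation_wedge: "internal_relation int_pgrp wedge_pgrp id"
  using preord_group_int_pgrp preord_group_wedge_pgrp
  by (auto simp: internal_relation_def pgrp_mono_def pgrp_hom_def hom_def
                 int_pgrp_def wedge_pgrp_def pgrp_prod_def)

lemma factors_through_wedge_iff:
  assumes "f \<in> hom integer_group (integer_group \<times>\<times> integer_group)"
  shows "factors_through int_pgrp wedge_pgrp f id \<longleftrightarrow>
           (\<forall>x \<ge> 0. 0 \<le> snd (f x) \<and> snd (f x) \<le> fst (f x))"
proof -
  have "pgrp_hom int_pgrp wedge_pgrp f \<longleftrightarrow>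
          (\<forall>x \<ge> 0. 0 \<le> snd (f x) \<and> snd (f x) \<le> fst (f x))"
    using assms
    by (simp add: pgrp_hom_def int_pgrp_def wedge_pgrp_def image_subset_iff case_prod_beta)
  then show ?thesis
    by (simp only: factors_through_id_iff[OF preord_group_int_pgrp])
qed

theorem corollary3p10:
  shows "\<not> (\<forall>(X :: int pgrp) (R :: (int \<times> int) pgrp) (m :: int \<times> int \<Rightarrow> int \<times> int).
             subtractive_condition X R m)"
proof
  assume "\<forall>(X :: int pgrp) (R :: (int \<times> int) pgrp) (m :: int \<times> int \<Rightarrow> int \<times> int).
             subtractive_condition X R m"
  then have subtractive: "subtractive_condition int_pgrp wedge_pgrp id" by blast
  let ?Z = integer_group
  have homs: "(\<lambda>x. (x, x)) \<in> hom ?Z (?Z \<times>\<times> ?Z)" "(\<lambda>x. (x, 0)) \<in> hom ?Z (?Z \<times>\<times> ?Z)"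
      "(\<lambda>x. (0, x)) \<in> hom ?Z (?Z \<times>\<times> ?Z)"
    by (auto simp: hom_def)
  have "reflexive_relation int_pgrp wedge_pgrp id"
    using internal_relation_wedge factors_through_wedge_iff[OF homs(1)]
    by (simp add: reflexive_relation_def)
  moreover have "factors_through int_pgrp wedge_pgrp (\<lambda>x. (x, 0)) id"
    using factors_through_wedge_iff[OF homs(2)] by simp
  moreover have "\<not> factors_through int_pgrp wedge_pgrp (\<lambda>x. (0, x)) id"
    using factors_through_wedge_iff[OF homs(3)] by (auto intro: exI[of _ 1])
  ultimately show False
    using subtractive by (simp add: subtractive_condition_def int_pgrp_def)
qed

end
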